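(* Let $0\to\mathcal H_{\mathcal Q}\xrightarrow{inc}\mathcal E_{\mathcal R}\xrightarrow{proj}\mathcal L_{\mathcal N}\to0$ be a non-abelian extension of Nijenhuis Lie conformal algebras. Then the sequence $$1\longrightarrow\mathrm{Aut}^{\mathcal L,\mathcal H}_{\mathcal H}(\mathcal E_{\mathcal R})\xrightarrow{inc}\mathrm{Aut}_{\mathcal H}(\mathcal E_{\mathcal R})\xrightarrow{\Pi}\mathrm{Aut}(\mathcal H_{\mathcal Q})\times\mathrm{Aut}(\mathcal L_{\mathcal N})\xrightarrow{\mathfrak W}H^2_{nab}(\mathcal L_{\mathcal N},\mathcal H_{\mathcal Q})$$ is exact.
   Context: All spaces over $\mathbb C$. A Lie conformal algebra is a $\mathbb C[\partial]$-module with a $\mathbb C$-bilinear $\lambda$-bracket satisfying $[\partial a_\lambda b]=-\lambda[a_\lambda b]$, $[a_\lambda\partial b]=(\partial+\lambda)[a_\lambda b]$, $[a_\lambda b]=-[b_{-\partial-\lambda}a]$, $[a_\lambda[b_\mu c]]=[[a_\lambda b]_{\lambda+\mu}c]+[b_\mu[a_\lambda c]]$. A Nijenhuis operator is a $\mathbb C[\partial]$-linear $\mathcal N$ with $[\mathcal N(p)_\lambda\mathcal N(q)]=\mathcal N([\mathcal N(p)_\lambda q]+[p_\lambda\mathcal N(q)]-\mathcal N([p_\lambda q]))$; Nijenhuis Lie conformal algebras $\mathcal L_{\mathcal N}=(\mathcal L,[\cdot_\lambda\cdot]_{\mathcal L},\mathcal N)$, $\mathcal H_{\mathcal Q}=(\mathcal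 H,[\cdot_\lambda\cdot]_{\mathcal H},\mathcal Q)$, $\mathcal E_{\mathcal R}=(\mathcal E,[\cdot_\lambda\cdot]_{\mathcal E},\mathcal R)$ are Lie conformal algebras with Nijenhuis operators; morphisms are bracket-preserving $\mathbb C[\partial]$-linear maps intertwining the operators; $\mathrm{Aut}$ denotes bijective self-morphisms. A non-abelian extension is a short exact sequence of such morphisms as displayed, split as $\mathbb C[\partial]$-modules, with $\mathcal H\subset\mathcal E$ and $\mathcal R|_{\mathcal H}=\mathcal Q$; fix a $\mathbb C[\partial]$-linear section $s$ of $proj$ and the induced $\chi_\lambda(p,q)=[s(p)_\lambda s(q)]_{\mathcal E}-s([p_\lambda q]_{\mathcal L})$, $\rho(p)_\lambda h=[s(p)_\lambda h]_{\mathcal E}$, $\Phi(p)=\mathcal R(s(p))-s(\mathcal N(p))$. Non-abelian $2$-cocycles: triples $(\chi_\lambda:\mathcal L\otimes\mathcal L\to\mathcal H[\lambda],\rho:\mathcal L\otimes\mathcal H\to\mathcal H[\lambda],\Phi:\mathcal L\to\mathcal H)$ with (i) $\rho(p)_\lambda\rho(q)_\mu h-\rho(q)_\mu\rho(p)_\lambda h-\rho([p_\lambda q]_{\mathcal L})_{\lambda+\mu}h=[\chi_\lambda(p,q)_{\lambda+\mu}h]_{\mathcal H}$; (ii) $\rho(p)_\lambda\chi_\mu(q,r)+\rho(q)_\mu\chi_\lambda(r,p)+\rho(r)_{-\partial-\lambda-\mu}\chi_\lambda(p,q)-\chi_{\lambda+\mu}([q_\mu r]_{\mathcal L},p)-\chi_{\lambda+\mu}([r_{-\partial-\lambda}p]_{\mathcal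 L},q)-\chi_{\lambda+\mu}([p_\lambda q]_{\mathcal L},r)=0$; (iii) $\rho(\mathcal Np)_\lambda\mathcal Q(h)=\mathcal Q(\rho(\mathcal Np)_\lambda h+\rho(p)_\lambda\mathcal Q(h)-\mathcal Q(\rho(p)_\lambda h))+\mathcal Q([\Phi(p)_\lambda h]_{\mathcal H})-[\Phi(p)_\lambda\mathcal Q(h)]_{\mathcal H}$; (iv) $\chi_\lambda(\mathcal Np,\mathcal Nq)-\mathcal Q(\chi_\lambda(\mathcal Np,q)+\chi_\lambda(p,\mathcal Nq)-\mathcal Q\chi_\lambda(p,q))-\Phi([\mathcal N(p)_\lambda q]_{\mathcal L}+[p_\lambda\mathcal N(q)]_{\mathcal L}-\mathcal N[p_\lambda q]_{\mathcal L})+\rho(\mathcal Np)_\lambda\Phi(q)-\rho(\mathcal Nq)_{-\partial-\lambda}\Phi(p)+\mathcal Q(\rho(q)_{-\partial-\lambda}\Phi(p)-\rho(p)_\lambda\Phi(q)+\Phi([p_\lambda q]_{\mathcal L}))+[\Phi(p)_\lambda\Phi(q)]_{\mathcal H}=0$, for all $p,q,r\in\mathcal L$, $h\in\mathcal H$. Equivalence via a linear $\tau:\mathcal L\to\mathcal H$: $\rho(p)_\lambda h-\rho'(p)_\lambda h=[\tau(p)_\lambda h]_{\mathcal H}$, $\chi_\lambda(p,q)-\chi'_\lambda(p,q)=[\tau(p)_\lambda\tau(q)]_{\mathcal H}-\tau([p_\lambda q]_{\mathcal L})+\rho'(p)_\lambda\tau(q)-\rho'(q)_{-\partial-\lambda}\tau(p)$,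 $\Phi(p)-\Phi'(p)=\mathcal Q\tau(p)-\tau\mathcal N(p)$; $H^2_{nab}(\mathcal L_{\mathcal N},\mathcal H_{\mathcal Q})$ = equivalence classes. $\mathrm{Aut}_{\mathcal H}(\mathcal E_{\mathcal R})=\{\gamma\in\mathrm{Aut}(\mathcal E_{\mathcal R}):\gamma(\mathcal H)=\mathcal H\}$; $\Pi(\gamma)=(\gamma|_{\mathcal H},proj\circ\gamma\circ s)$; $\mathrm{Aut}^{\mathcal L,\mathcal H}_{\mathcal H}(\mathcal E_{\mathcal R})=\{\gamma\in\mathrm{Aut}_{\mathcal H}(\mathcal E_{\mathcal R}):\Pi(\gamma)=(\mathrm{Id}_{\mathcal H},\mathrm{Id}_{\mathcal L})\}$ with its inclusion $inc$. The Wells map is $\mathfrak W(\alpha,\beta)=[(\chi^{(\alpha,\beta)}_\lambda,\rho^{(\alpha,\beta)},\Phi^{(\alpha,\beta)})-(\chi_\lambda,\rho,\Phi)]$ where $\chi^{(\alpha,\beta)}_\lambda(p,q)=\alpha\chi_\lambda(\beta^{-1}p,\beta^{-1}q)$, $\rho^{(\alpha,\beta)}(p)_\lambda h=\alpha(\rho(\beta^{-1}p)_\lambda\alpha^{-1}h)$, $\Phi^{(\alpha,\beta)}(p)=\alpha\Phi(\beta^{-1}p)$. Exactness at $\mathrm{Aut}(\mathcal H_{\mathcal Q})\times\mathrm{Aut}(\mathcal L_{\mathcal N})$ means: the image of $\Pi$ equals the set of pairs $(\alpha,\beta)$ at which $\mathfrak W$ is trivial, i.e. for which $(\chi^{(\alpha,\beta)}_\lambda,\rho^{(\alpha,\beta)},\Phi^{(\alpha,\beta)})$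 is equivalent to $(\chi_\lambda,\rho,\Phi)$; exactness at the other terms means $inc$ is injective and $\ker\Pi=\mathrm{Aut}^{\mathcal L,\mathcal H}_{\mathcal H}(\mathcal E_{\mathcal R})$. *)

theory Defs
  imports Complex_Main
begin

text \<open>The lambda-bracket [a_lambda b] is stored by its coefficients:
  lbr A a b n is the coefficient of lambda^n (finitely many nonzero).\<close>

record 'a lca =
  scal :: "complex \<Rightarrow> 'a \<Rightarrow> 'a"
  der  :: "'a \<Rightarrow> 'a"
  lbr  :: "'a \<Rightarrow> 'a \<Rightarrow> nat \<Rightarrow> 'a"

record 'a nlca = "'a lca" +
  nij :: "'a \<Rightarrow> 'a"

text \<open>With T = (x *) this is ordinary evaluation at x;
  with T = (- d - x) it is the substitution lambda := -d - x.\<close>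
definition opev :: "('a::ab_group_add \<Rightarrow> 'a) \<Rightarrow> (nat \<Rightarrow> 'a) \<Rightarrow> 'a" where
  "opev T c = (\<Sum>n\<in>{n. c n \<noteq> 0}. (T ^^ n) (c n))"

definition lb :: "('a::ab_group_add, 'z) lca_scheme \<Rightarrow> 'a \<Rightarrow> 'a \<Rightarrow> complex \<Rightarrow> 'a" where
  "lb A a b x = opev (scal A x) (lbr A a b)"

definition lbD :: "('a::ab_group_add, 'z) lca_scheme \<Rightarrow> 'a \<Rightarrow> 'a \<Rightarrow> complex \<Rightarrow> 'a" where
  "lbD A a b x = opev (\<lambda>v. - der A v - scal A x v) (lbr A a b)"

definition cmod :: "('a::ab_group_add, 'z) lca_scheme \<Rightarrow> bool" where
  "cmod A \<longleftrightarrow> vector_space (scal A) \<and> Vector_Spaces.linear (scal A) (scal A) (der A)"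

definition dlinear :: "('a::ab_group_add, 'z) lca_scheme \<Rightarrow> ('b::ab_group_add, 'y) lca_scheme
    \<Rightarrow> ('a \<Rightarrow> 'b) \<Rightarrow> bool" where
  "dlinear A B f \<longleftrightarrow> Vector_Spaces.linear (scal A) (scal B) f \<and> (\<forall>a. f (der A a) = der B (f a))"

definition is_lca :: "('a::ab_group_add, 'z) lca_scheme \<Rightarrow> bool" where
  "is_lca A \<longleftrightarrow> cmod A
    \<and> (\<forall>a b. finite {n. lbr A a b n \<noteq> 0})
    \<and> (\<forall>b n. Vector_Spaces.linear (scal A) (scal A) (\<lambda>a. lbr A a b n))
    \<and> (\<forall>a n. Vector_Spaces.linear (scal A) (scal A) (\<lambda>b. lbr A a b n))
    \<and> (\<forall>a b x. lb A (der A a) b x = - scal A x (lb A a b x))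
    \<and> (\<forall>a b x. lb A a (der A b) x = der A (lb A a b x) + scal A x (lb A a b x))
    \<and> (\<forall>a b x. lb A a b x = - lbD A b a x)
    \<and> (\<forall>a b c x y. lb A a (lb A b c y) x = lb A (lb A a b x) c (x + y) + lb A b (lb A a c x) y)"

definition is_nlca :: "('a::ab_group_add, 'z) nlca_scheme \<Rightarrow> bool" where
  "is_nlca A \<longleftrightarrow> is_lca A \<and> dlinear A A (nij A)
    \<and> (\<forall>p q n. lbr A (nij A p) (nij A q) n
          = nij A (lbr A (nij A p) q n + lbr A p (nij A q) n - nij A (lbr A p q n)))"

definition morph :: "('a::ab_group_add, 'z) nlca_scheme \<Rightarrow> ('b::ab_group_add, 'y) nlca_scheme
    \<Rightarrow> ('a \<Rightarrow> 'b) \<Rightarrow> bool" where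
  "morph A B f \<longleftrightarrow> dlinear A B f
    \<and> (\<forall>a b n. f (lbr A a b n) = lbr B (f a) (f b) n)
    \<and> (\<forall>a. f (nij A a) = nij B (f a))"

definition Aut :: "('a::ab_group_add, 'z) nlca_scheme \<Rightarrow> ('a \<Rightarrow> 'a) set" where
  "Aut A = {f. morph A A f \<and> bij f}"

text \<open>Non-abelian extension 0 -> H -> E -> L -> 0 (splitting as C[d]-modules
  is expressed separately by a C[d]-linear section)\<close>
definition nab_extension :: "('h::ab_group_add) nlca \<Rightarrow> ('e::ab_group_add) nlca
    \<Rightarrow> ('l::ab_group_add) nlca \<Rightarrow> ('h \<Rightarrow> 'e) \<Rightarrow> ('e \<Rightarrow> 'l) \<Rightarrow> bool" where
  "nab_extension H E L inc proj \<longleftrightarrow> is_nlca H \<and> is_nlca E \<and> is_nlca L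
    \<and> morph H E inc \<and> morph E L proj \<and> inj inc \<and> surj proj
    \<and> range inc = {e. proj e = 0}"

definition cev :: "('h::ab_group_add, 'z) lca_scheme \<Rightarrow> ('l \<Rightarrow> 'l \<Rightarrow> nat \<Rightarrow> 'h)
    \<Rightarrow> 'l \<Rightarrow> 'l \<Rightarrow> complex \<Rightarrow> 'h" where
  "cev H chi p q x = opev (scal H x) (chi p q)"

definition rev :: "('h::ab_group_add, 'z) lca_scheme \<Rightarrow> ('l \<Rightarrow> 'h \<Rightarrow> nat \<Rightarrow> 'h)
    \<Rightarrow> 'l \<Rightarrow> 'h \<Rightarrow> complex \<Rightarrow> 'h" where
  "rev H rho p h x = opev (scal H x) (rho p h)"

definition revD :: "('h::ab_group_add, 'z) lca_scheme \<Rightarrow> ('l \<Rightarrow> 'h \<Rightarrow> nat \<Rightarrow> 'h)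
    \<Rightarrow> 'l \<Rightarrow> 'h \<Rightarrow> complex \<Rightarrow> 'h" where
  "revD H rho p h x = opev (\<lambda>v. - der H v - scal H x v) (rho p h)"

definition nab_equiv :: "('l::ab_group_add) nlca \<Rightarrow> ('h::ab_group_add) nlca
    \<Rightarrow> ('l \<Rightarrow> 'l \<Rightarrow> nat \<Rightarrow> 'h) \<Rightarrow> ('l \<Rightarrow> 'h \<Rightarrow> nat \<Rightarrow> 'h) \<Rightarrow> ('l \<Rightarrow> 'h)
    \<Rightarrow> ('l \<Rightarrow> 'l \<Rightarrow> nat \<Rightarrow> 'h) \<Rightarrow> ('l \<Rightarrow> 'h \<Rightarrow> nat \<Rightarrow> 'h) \<Rightarrow> ('l \<Rightarrow> 'h) \<Rightarrow> bool" where
  "nab_equiv L H chi rho Phi chi' rho' Phi' \<longleftrightarrow>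
    (\<exists>\<tau>. dlinear L H \<tau>
      \<and> (\<forall>p h x. rev H rho p h x - rev H rho' p h x = lb H (\<tau> p) h x)
      \<and> (\<forall>p q x. cev H chi p q x - cev H chi' p q x
            = lb H (\<tau> p) (\<tau> q) x - \<tau> (lb L p q x) + rev H rho' p (\<tau> q) x - revD H rho' q (\<tau> p) x)
      \<and> (\<forall>p. Phi p - Phi' p = nij H (\<tau> p) - \<tau> (nij L p)))"

definition AutH :: "('e::ab_group_add) nlca \<Rightarrow> ('h \<Rightarrow> 'e) \<Rightarrow> ('e \<Rightarrow> 'e) set" where
  "AutH E inc = {\<gamma> \<in> Aut E. \<gamma> ` range inc = range inc}"

definition PiMap :: "('h \<Rightarrow> 'e) \<Rightarrow> ('e \<Rightarrow> 'l) \<Rightarrow> ('l \<Rightarrow> 'e) \<Rightarrow> ('e \<Rightarrow> 'e)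
    \<Rightarrow> ('h \<Rightarrow> 'h) \<times> ('l \<Rightarrow> 'l)" where
  "PiMap inc proj s \<gamma> = (inv inc \<circ> \<gamma> \<circ> inc, proj \<circ> \<gamma> \<circ> s)"

definition AutLH :: "('e::ab_group_add) nlca \<Rightarrow> ('h \<Rightarrow> 'e) \<Rightarrow> ('e \<Rightarrow> 'l) \<Rightarrow> ('l \<Rightarrow> 'e)
    \<Rightarrow> ('e \<Rightarrow> 'e) set" where
  "AutLH E inc proj s = {\<gamma> \<in> AutH E inc. PiMap inc proj s \<gamma> = (id, id)}"

end

theory Submission
  imports Defs
begin

text \<open>An automorphism \<open>\<gamma>\<close> of \<open>E\<close> preserving \<open>H\<close> restricts to \<open>\<alpha>\<close> on \<open>H\<close> and induces \<open>\<beta>\<close>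
  on \<open>L\<close>; the defect \<open>\<gamma>(s(\<beta>\<^sup>-\<^sup>1 p)) = s p + \<tau> p\<close> is a \<open>\<complex>[\<partial>]\<close>-linear map \<open>\<tau> : L \<rightarrow> H\<close>.
  Writing \<open>E = s(L) \<oplus> H\<close>, compatibility of \<open>\<gamma>\<close> with the brackets and the Nijenhuis operators
  says precisely that \<open>\<tau>\<close> is an equivalence between the cocycle transported along \<open>(\<alpha>, \<beta>)\<close>
  and the original one. Conversely, such an equivalence \<open>\<tau>\<close> makes
  \<open>\<gamma>(s p + h) = s(\<beta> p) + \<tau>(\<beta> p) + \<alpha> h\<close> an automorphism with \<open>\<Pi>(\<gamma>) = (\<alpha>, \<beta>)\<close>.
  Bracket identities are compared coefficientwise in \<open>\<lambda>\<close> by evaluating at all complex \<open>\<lambda>\<close>,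
  which determines a polynomial with coefficients in a complex vector space.
  Exactness at the other two places holds by definition.\<close>

section \<open>Polynomials evaluated at additive operators\<close>

lemma funpow_intertwine:
  assumes "\<And>v. f (T v) = T' (f v)"
  shows "f ((T ^^ n) v) = (T' ^^ n) (f v)"
  by (induction n) (simp_all add: assms)

lemma funpow_fixes_zero:
  fixes T :: "'a::ab_group_add \<Rightarrow> 'a"
  assumes "T 0 = 0"
  shows "(T ^^ n) 0 = 0"
  by (induction n) (simp_all add: assms)

lemma funpow_additive:
  fixes T :: "'a::ab_group_add \<Rightarrow> 'a"
  assumes "\<And>a b. T (a + b) = T a + T b"
  shows "(T ^^ n) (a + b) = (T ^^ n) a + (T ^^ n) b"
  by (induction n) (simp_all add: assms)

lemma additive_imp_zero:
  fixes f :: "'a::ab_group_add \<Rightarrow> 'b::ab_group_add"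
  assumes "\<And>a b. f (a + b) = f a + f b"
  shows "f 0 = 0"
  using assms[of 0 0] by simp

lemma opev_eq_sum:
  fixes c :: "nat \<Rightarrow> 'a::ab_group_add"
  assumes "finite S" "{n. c n \<noteq> 0} \<subseteq> S" "T 0 = 0"
  shows "opev T c = (\<Sum>n\<in>S. (T ^^ n) (c n))"
  unfolding opev_def
  by (rule sum.mono_neutral_left) (use assms funpow_fixes_zero[of T] in auto)

lemma opev_map:
  fixes f :: "'a::ab_group_add \<Rightarrow> 'b::ab_group_add"
  assumes add: "\<And>a b. f (a + b) = f a + f b"
    and comm: "\<And>v. f (T v) = T' (f v)"
    and fin: "finite {n. c n \<noteq> 0}" and T'0: "T' 0 = 0"
  shows "f (opev T c) = opev T' (\<lambda>n. f (c n))"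
proof -
  have f0: "f 0 = 0" by (rule additive_imp_zero[OF add])
  have "opev T' (\<lambda>n. f (c n)) = (\<Sum>n\<in>{n. c n \<noteq> 0}. (T' ^^ n) (f (c n)))"
    by (rule opev_eq_sum) (auto simp: f0 fin T'0)
  also have "\<dots> = (\<Sum>n\<in>{n. c n \<noteq> 0}. f ((T ^^ n) (c n)))"
    by (simp add: funpow_intertwine[of f T T', OF comm])
  also have "\<dots> = f (opev T c)"
    unfolding opev_def using sum_comp_morphism[of f "\<lambda>n. (T ^^ n) (c n)", OF f0 add]
    by (simp add: o_def)
  finally show ?thesis by simp
qed

lemma opev_add:
  fixes c d :: "nat \<Rightarrow> 'a::ab_group_add"
  assumes add: "\<And>a b. T (a + b) = T a + T b"
    and fc: "finite {n. c n \<noteq> 0}" and fd: "finite {n. d n \<noteq> 0}"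
  shows "opev T (\<lambda>n. c n + d n) = opev T c + opev T d"
proof -
  have T0: "T 0 = 0" by (rule additive_imp_zero[OF add])
  let ?S = "{n. c n \<noteq> 0} \<union> {n. d n \<noteq> 0}"
  have sum_S: "opev T e = (\<Sum>n\<in>?S. (T ^^ n) (e n))" if "{n. e n \<noteq> 0} \<subseteq> ?S" for e
    by (rule opev_eq_sum) (use fc fd T0 that in auto)
  show ?thesis
    by (subst (1 2 3) sum_S) (auto simp: funpow_additive[OF add] sum.distrib)
qed

lemma vector_space_scale_right:
  assumes "vector_space sc"
  shows "sc a 0 = 0" and "sc a (x + y) = sc a x + sc a y" and "sc a (x - y) = sc a x - sc a y"
proof -
  interpret vector_space sc by fact
  show "sc a 0 = 0" and "sc a (x + y) = sc a x + sc a y" and "sc a (x - y) = sc a x - sc a y"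
    by (simp_all add: scale_right_distrib scale_right_diff_distrib)
qed

lemma funpow_scale:
  assumes "vector_space sc"
  shows "((sc x) ^^ n) v = sc (x ^ n) v"
proof -
  interpret vector_space sc by fact
  show ?thesis by (induction n) (simp_all add: mult.commute)
qed

text \<open>Each coordinate in a basis is a complex polynomial vanishing identically.\<close>
lemma vector_polyfun_eq_0:
  fixes sc :: "complex \<Rightarrow> 'b::ab_group_add \<Rightarrow> 'b"
  assumes vs: "vector_space sc" and zero: "\<And>x. (\<Sum>k\<le>N. sc (x ^ k) (c k)) = 0" and "n \<le> N"
  shows "c n = 0"
proof -
  interpret vs: vector_space sc by fact
  obtain B where B: "vs.independent B" "UNIV \<subseteq> vs.span B"
    using vs.basis_exists[of UNIV] by blast
  have span: "v \<in> vs.span B" for v using B by auto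
  have "vs.representation B (c n) b = 0" for b
  proof -
    have "(\<Sum>k\<le>N. vs.representation B (c k) b * x ^ k) = 0" for x
      using arg_cong[OF zero[of x], of "\<lambda>v. vs.representation B v b"]
      by (simp add: vs.representation_sum[OF B(1)] span vs.representation_scale[OF B(1) span]
          vs.representation_zero mult.commute)
    then have "\<forall>i\<le>N. vs.representation B (c i) b = 0"
      using polyfun_eq_0[where c = "\<lambda>k. vs.representation B (c k) b" and n = N] by blast
    then show ?thesis using \<open>n \<le> N\<close> by blast
  qed
  then show "c n = 0"
    using vs.sum_nonzero_representation_eq[OF B(1) span, of "c n"] by simp
qed

lemma opev_scale_inject:
  fixes sc :: "complex \<Rightarrow> 'b::ab_group_add \<Rightarrow> 'b"
  assumes vs: "vector_space sc"
    and fc: "finite {n. c n \<noteq> 0}" and fd: "finite {n. d n \<noteq> 0}"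
    and eq: "\<And>x. opev (sc x) c = opev (sc x) d"
  shows "c = d"
proof
  fix n
  let ?S = "{n. c n \<noteq> 0} \<union> {n. d n \<noteq> 0}"
  define N where "N = Max ?S"
  have below_N: "?S \<subseteq> {..N}"
    unfolding N_def using fc fd by (auto intro: Max_ge)
  have sum_N: "opev (sc x) e = (\<Sum>k\<le>N. sc (x ^ k) (e k))" if "{n. e n \<noteq> 0} \<subseteq> ?S" for x e
    by (subst opev_eq_sum[of "{..N}"])
      (use that below_N in \<open>auto simp: funpow_scale[OF vs] vector_space_scale_right[OF vs]\<close>)
  have "(\<Sum>k\<le>N. sc (x ^ k) (c k - d k)) = 0" for x
    using eq[of x] by (simp add: sum_N vector_space_scale_right[OF vs] sum_subtractf)
  then have "n \<le> N \<Longrightarrow> c n - d n = 0"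
    by (rule vector_polyfun_eq_0[OF vs])
  moreover have "n \<notin> {..N} \<Longrightarrow> c n = 0 \<and> d n = 0"
    using below_N by blast
  ultimately show "c n = d n" by force
qed

section \<open>\<open>\<complex>[\<partial>]\<close>-linear maps and lambda-brackets\<close>

lemma dlinearD:
  assumes "dlinear A B f"
  shows dlinear_add: "f (a + b) = f a + f b"
    and dlinear_scal: "f (scal A c a) = scal B c (f a)"
    and dlinear_der: "f (der A a) = der B (f a)"
    and dlinear_zero: "f 0 = 0"
    and dlinear_neg: "f (- a) = - f a"
    and dlinear_diff: "f (a - b) = f a - f b"
    and dlinear_vs_dom: "vector_space (scal A)"
    and dlinear_vs_cod: "vector_space (scal B)"
proof -
  have l: "Vector_Spaces.linear (scal A) (scal B) f" and d: "\<And>a. f (der A a) = der B (f a)"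
    using assms unfolding dlinear_def by auto
  interpret Vector_Spaces.linear "scal A" "scal B" f by (rule l)
  show "f (a + b) = f a + f b" by (rule add)
  show "f (scal A c a) = scal B c (f a)" by (rule scale)
  show "f (der A a) = der B (f a)" by (rule d)
  show "f 0 = 0" by simp
  show "f (- a) = - f a" by (rule neg)
  show "f (a - b) = f a - f b" by (rule diff)
  show "vector_space (scal A)" by unfold_locales
  show "vector_space (scal B)" by unfold_locales
qed

lemma dlinearI:
  assumes "vector_space (scal A)" "vector_space (scal B)"
    and "\<And>a b. f (a + b) = f a + f b" and "\<And>c a. f (scal A c a) = scal B c (f a)"
    and "\<And>a. f (der A a) = der B (f a)"
  shows "dlinear A B f"
  unfolding dlinear_def Vector_Spaces.linear_iff using assms by auto

lemma dlinear_comp: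
  assumes "dlinear A B f" and "dlinear B C g"
  shows "dlinear A C (\<lambda>x. g (f x))"
  using assms Vector_Spaces.linear_compose[of "scal A" "scal B" f "scal C" g]
  unfolding dlinear_def by (auto simp: o_def)

lemma dlinear_plus:
  assumes f: "dlinear A B f" and g: "dlinear A B g" and dB: "dlinear B B (der B)"
  shows "dlinear A B (\<lambda>x. f x + g x)"
  using dlinear_vs_dom[OF f] dlinear_vs_cod[OF f]
  by (rule dlinearI) (simp_all add: dlinear_add[OF f] dlinear_add[OF g] dlinear_scal[OF f]
      dlinear_scal[OF g] dlinear_der[OF f] dlinear_der[OF g] dlinear_add[OF dB]
      vector_space_scale_right[OF dlinear_vs_cod[OF f]] algebra_simps)

lemma dlinear_inv:
  assumes f: "dlinear A A f" and b: "bij f"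
  shows "dlinear A A (inv f)"
proof (rule dlinearI[OF dlinear_vs_dom[OF f] dlinear_vs_dom[OF f]])
  have inj: "inj f" and ff: "\<And>y. f (inv f y) = y" using b by (auto simp: bij_def surj_f_inv_f)
  show "inv f (a + b) = inv f a + inv f b" for a b
    by (rule injD[OF inj]) (simp add: ff dlinear_add[OF f])
  show "inv f (scal A c a) = scal A c (inv f a)" for c a
    by (rule injD[OF inj]) (simp add: ff dlinear_scal[OF f])
  show "inv f (der A a) = der A (inv f a)" for a
    by (rule injD[OF inj]) (simp add: ff dlinear_der[OF f])
qed

lemma dlinear_opev:
  assumes f: "dlinear A B f" and fin: "finite {n. c n \<noteq> 0}"
  shows "f (opev (scal A x) c) = opev (scal B x) (\<lambda>n. f (c n))"
  by (rule opev_map)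
    (use f fin in \<open>auto simp: dlinear_add[OF f] dlinear_scal[OF f]
      vector_space_scale_right[OF dlinear_vs_cod[OF f]]\<close>)

lemma dlinear_opevD:
  assumes f: "dlinear A B f" and dB: "dlinear B B (der B)" and fin: "finite {n. c n \<noteq> 0}"
  shows "f (opev (\<lambda>v. - der A v - scal A x v) c) = opev (\<lambda>v. - der B v - scal B x v) (\<lambda>n. f (c n))"
  by (rule opev_map)
    (use f fin in \<open>auto simp: dlinear_add[OF f] dlinear_scal[OF f] dlinear_diff[OF f]
      dlinear_neg[OF f] dlinear_der[OF f] dlinear_zero[OF dB]
      vector_space_scale_right[OF dlinear_vs_cod[OF f]]\<close>)

lemma finite_nonzero_map:
  assumes "finite {n. c n \<noteq> 0}" and "f 0 = 0"
  shows "finite {n. f (c n) \<noteq> 0}"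
  by (rule finite_subset[OF _ assms(1)]) (use assms(2) in auto)

lemma is_lcaD:
  assumes "is_lca A"
  shows lca_vector_space: "vector_space (scal A)"
    and lca_der_dlinear: "dlinear A A (der A)"
    and lca_finite: "finite {n. lbr A a b n \<noteq> 0}"
    and lbr_addl: "lbr A (a1 + a2) b n = lbr A a1 b n + lbr A a2 b n"
    and lbr_addr: "lbr A a (b1 + b2) n = lbr A a b1 n + lbr A a b2 n"
    and lb_skew: "lb A a b x = - lbD A b a x"
proof -
  have c: "cmod A" and lin:
    "Vector_Spaces.linear (scal A) (scal A) (\<lambda>a. lbr A a b n)"
    "Vector_Spaces.linear (scal A) (scal A) (\<lambda>b. lbr A a b n)"
    using assms by (simp_all add: is_lca_def)
  show "vector_space (scal A)" using c by (simp add: cmod_def)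
  show "dlinear A A (der A)" using c by (simp add: cmod_def dlinear_def)
  show "finite {n. lbr A a b n \<noteq> 0}" using assms by (simp add: is_lca_def)
  show "lbr A (a1 + a2) b n = lbr A a1 b n + lbr A a2 b n"
    using lin(1) by (simp add: Vector_Spaces.linear_iff)
  show "lbr A a (b1 + b2) n = lbr A a b1 n + lbr A a b2 n"
    using lin(2) by (simp add: Vector_Spaces.linear_iff)
  show "lb A a b x = - lbD A b a x" using assms by (simp add: is_lca_def)
qed

lemma lb_addl:
  assumes "is_lca A"
  shows "lb A (a1 + a2) b x = lb A a1 b x + lb A a2 b x"
  unfolding lb_def lbr_addl[OF assms]
  by (rule opev_add)
    (auto simp: lca_finite[OF assms] vector_space_scale_right[OF lca_vector_space[OF assms]])

lemma lb_addr:
  assumes "is_lca A"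
  shows "lb A a (b1 + b2) x = lb A a b1 x + lb A a b2 x"
  unfolding lb_def lbr_addr[OF assms]
  by (rule opev_add)
    (auto simp: lca_finite[OF assms] vector_space_scale_right[OF lca_vector_space[OF assms]])

lemma lb_map:
  assumes A: "is_lca A" and f: "dlinear A B f"
    and br: "\<And>n. f (lbr A a b n) = lbr B (f a) (f b) n"
  shows "f (lb A a b x) = lb B (f a) (f b) x"
  unfolding lb_def by (simp add: dlinear_opev[OF f lca_finite[OF A]] br)

lemma lbD_map:
  assumes A: "is_lca A" and B: "is_lca B" and f: "dlinear A B f"
    and br: "\<And>n. f (lbr A a b n) = lbr B (f a) (f b) n"
  shows "f (lbD A a b x) = lbD B (f a) (f b) x"
  unfolding lbD_def
  by (simp add: dlinear_opevD[OF f lca_der_dlinear[OF B] lca_finite[OF A]] br)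

lemma lbr_map_of_lb_map:
  assumes A: "is_lca A" and f: "dlinear A A f"
    and ev: "\<And>x. f (lb A a b x) = lb A (f a) (f b) x"
  shows "f (lbr A a b n) = lbr A (f a) (f b) n"
proof -
  have "(\<lambda>n. f (lbr A a b n)) = lbr A (f a) (f b)"
  proof (rule opev_scale_inject[OF lca_vector_space[OF A]])
    show "finite {n. f (lbr A a b n) \<noteq> 0}"
      by (rule finite_nonzero_map[of "lbr A a b" f, OF lca_finite[OF A] dlinear_zero[OF f]])
    show "finite {n. lbr A (f a) (f b) n \<noteq> 0}" by (rule lca_finite[OF A])
    show "opev (scal A x) (\<lambda>n. f (lbr A a b n)) = opev (scal A x) (lbr A (f a) (f b))" for x
      using ev[of x] unfolding lb_def by (simp add: dlinear_opev[OF f lca_finite[OF A]])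
  qed
  then show ?thesis by (rule fun_cong)
qed

lemma lbr_map_swap:
  assumes A: "is_lca A" and f: "dlinear A A f"
    and br: "\<And>n. f (lbr A a b n) = lbr A (f a) (f b) n"
  shows "f (lbr A b a n) = lbr A (f b) (f a) n"
  by (rule lbr_map_of_lb_map[OF A f])
    (simp add: lb_skew[OF A, of b a] lb_skew[OF A, of "f b" "f a"] dlinear_neg[OF f]
      lbD_map[OF A A f br])

lemma AutD:
  assumes "f \<in> Aut A"
  shows Aut_dlinear: "dlinear A A f"
    and Aut_lbr: "f (lbr A a b n) = lbr A (f a) (f b) n"
    and Aut_nij: "f (nij A a) = nij A (f a)"
    and Aut_inv_f: "inv f (f a) = a"
    and Aut_f_inv: "f (inv f a) = a"
  using assms by (auto simp: Aut_def morph_def bij_def surj_f_inv_f)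

lemma Aut_inv:
  assumes f: "f \<in> Aut A"
  shows "inv f \<in> Aut A"
proof -
  have b: "bij f" using f by (simp add: Aut_def)
  then have i: "inj f" by (simp add: bij_def)
  have "inv f (lbr A a b n) = lbr A (inv f a) (inv f b) n" for a b n
    by (rule injD[OF i]) (simp add: Aut_f_inv[OF f] Aut_lbr[OF f])
  moreover have "inv f (nij A a) = nij A (inv f a)" for a
    by (rule injD[OF i]) (simp add: Aut_f_inv[OF f] Aut_nij[OF f])
  ultimately show ?thesis
    using dlinear_inv[OF Aut_dlinear[OF f] b] bij_imp_bij_inv[OF b] by (simp add: Aut_def morph_def)
qed

section \<open>Split extensions\<close>

locale split_extension =
  fixes H :: "('h::ab_group_add) nlca" and E :: "('e::ab_group_add) nlca"
    and L :: "('l::ab_group_add) nlca"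
    and inc :: "'h \<Rightarrow> 'e" and proj :: "'e \<Rightarrow> 'l" and s :: "'l \<Rightarrow> 'e"
    and chi :: "'l \<Rightarrow> 'l \<Rightarrow> nat \<Rightarrow> 'h" and rho :: "'l \<Rightarrow> 'h \<Rightarrow> nat \<Rightarrow> 'h"
    and Phi :: "'l \<Rightarrow> 'h"
  assumes ext: "nab_extension H E L inc proj"
    and s_lin: "dlinear L E s"
    and s_sec: "\<forall>p. proj (s p) = p"
    and chi_def: "\<forall>p q n. inc (chi p q n) = lbr E (s p) (s q) n - s (lbr L p q n)"
    and rho_def: "\<forall>p h n. inc (rho p h n) = lbr E (s p) (inc h) n"
    and Phi_def: "\<forall>p. inc (Phi p) = nij E (s p) - s (nij L p)"
begin

lemma H_lca: "is_lca H" and E_lca: "is_lca E" and L_lca: "is_lca L"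
  and nij_H_dlinear: "dlinear H H (nij H)" and nij_E_dlinear: "dlinear E E (nij E)"
  and inc_dlinear: "dlinear H E inc" and proj_dlinear: "dlinear E L proj"
  and inc_lbr: "inc (lbr H a b n) = lbr E (inc a) (inc b) n"
  and inc_nij: "inc (nij H a) = nij E (inc a)"
  and proj_lbr: "proj (lbr E a' b' n) = lbr L (proj a') (proj b') n"
  and proj_nij: "proj (nij E a') = nij L (proj a')"
  and inc_inj: "inj inc" and proj_surj: "surj proj"
  and range_inc: "range inc = {e. proj e = 0}"
  using ext by (auto simp: nab_extension_def is_nlca_def morph_def)

lemma inc_eq_iff: "inc a = inc b \<longleftrightarrow> a = b"
  using inc_inj by (auto dest: injD)

lemma inv_inc_inc [simp]: "inv inc (inc h) = h"
  by (rule inv_f_f[OF inc_inj])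

lemma proj_inc [simp]: "proj (inc h) = 0"
  using range_inc by auto

lemma proj_s [simp]: "proj (s p) = p"
  using s_sec by auto

lemma inc_inv_inc_ker: "proj e = 0 \<Longrightarrow> inc (inv inc e) = e"
  using range_inc by (auto intro: f_inv_into_f)

definition hpart :: "'e \<Rightarrow> 'h" where
  "hpart e = inv inc (e - s (proj e))"

lemma inc_hpart: "inc (hpart e) = e - s (proj e)"
  unfolding hpart_def by (rule inc_inv_inc_ker) (simp add: dlinear_diff[OF proj_dlinear])

lemma split_decomp: "e = s (proj e) + inc (hpart e)"
  by (simp add: inc_hpart)

lemma hpart_dlinear: "dlinear E H hpart"
proof (rule dlinearI[OF lca_vector_space[OF E_lca] lca_vector_space[OF H_lca]])
  note simps = inc_hpart dlinear_add[OF inc_dlinear] dlinear_scal[OF inc_dlinear]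
    dlinear_der[OF inc_dlinear] dlinear_add[OF proj_dlinear] dlinear_scal[OF proj_dlinear]
    dlinear_der[OF proj_dlinear] dlinear_add[OF s_lin] dlinear_scal[OF s_lin] dlinear_der[OF s_lin]
  show "hpart (a + b) = hpart a + hpart b" for a b
    by (rule injD[OF inc_inj]) (simp add: simps)
  show "hpart (scal E c a) = scal H c (hpart a)" for c a
    by (rule injD[OF inc_inj])
      (simp add: simps vector_space_scale_right[OF lca_vector_space[OF E_lca]])
  show "hpart (der E a) = der H (hpart a)" for a
    by (rule injD[OF inc_inj]) (simp add: simps dlinear_diff[OF lca_der_dlinear[OF E_lca]])
qed

lemma hpart_s [simp]: "hpart (s p) = 0"
  by (rule injD[OF inc_inj]) (simp add: inc_hpart dlinear_zero[OF inc_dlinear])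

lemma hpart_inc [simp]: "hpart (inc h) = h"
  by (rule injD[OF inc_inj]) (simp add: inc_hpart dlinear_zero[OF s_lin])

lemma proj_split [simp]: "proj (s p + inc h) = p"
  by (simp add: dlinear_add[OF proj_dlinear])

lemma hpart_split [simp]: "hpart (s p + inc h) = h"
  by (simp add: dlinear_add[OF hpart_dlinear])

lemma finite_rho: "finite {n. rho p h n \<noteq> 0}"
proof -
  have "rho p h n \<noteq> 0 \<longleftrightarrow> lbr E (s p) (inc h) n \<noteq> 0" for n
    using inc_eq_iff[of "rho p h n" 0] rho_def dlinear_zero[OF inc_dlinear] by simp
  then show ?thesis using lca_finite[OF E_lca] by simp
qed

lemma finite_chi: "finite {n. chi p q n \<noteq> 0}"
proof (rule finite_subset)
  have "chi p q n \<noteq> 0 \<Longrightarrow> lbr E (s p) (s q) n \<noteq> 0 \<or> lbr L p q n \<noteq> 0" for n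
    using inc_eq_iff[of "chi p q n" 0] chi_def dlinear_zero[OF inc_dlinear] dlinear_zero[OF s_lin]
    by auto
  then show "{n. chi p q n \<noteq> 0} \<subseteq> {n. lbr E (s p) (s q) n \<noteq> 0} \<union> {n. lbr L p q n \<noteq> 0}"
    by blast
qed (simp add: lca_finite[OF E_lca] lca_finite[OF L_lca])

lemma inc_rev: "inc (rev H rho p h x) = lb E (s p) (inc h) x"
  unfolding rev_def lb_def by (simp add: dlinear_opev[OF inc_dlinear finite_rho] rho_def)

lemma inc_revD: "inc (revD H rho p h x) = lbD E (s p) (inc h) x"
  unfolding revD_def lbD_def
  by (simp add: dlinear_opevD[OF inc_dlinear lca_der_dlinear[OF E_lca] finite_rho] rho_def)

lemma inc_cev: "inc (cev H chi p q x) = lb E (s p) (s q) x - s (lb L p q x)"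
proof -
  have "lbr E (s p) (s q) = (\<lambda>n. inc (chi p q n) + s (lbr L p q n))"
    using chi_def by auto
  then have "lb E (s p) (s q) x
      = opev (scal E x) (\<lambda>n. inc (chi p q n)) + opev (scal E x) (\<lambda>n. s (lbr L p q n))"
    unfolding lb_def
    by (simp add: opev_add vector_space_scale_right[OF lca_vector_space[OF E_lca]]
        finite_nonzero_map[of "chi p q" inc, OF finite_chi dlinear_zero[OF inc_dlinear]]
        finite_nonzero_map[of "lbr L p q" s, OF lca_finite[OF L_lca] dlinear_zero[OF s_lin]])
  then show ?thesis
    unfolding cev_def lb_def
    by (simp add: dlinear_opev[OF inc_dlinear finite_chi] dlinear_opev[OF s_lin lca_finite[OF L_lca]])
qed

lemma inc_lb: "inc (lb H a b x) = lb E (inc a) (inc b) x"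
  by (rule lb_map[OF H_lca inc_dlinear inc_lbr])

lemma lb_split:
  "lb E (s p + inc u) (s q + inc v) x
    = s (lb L p q x) + inc (cev H chi p q x + rev H rho p v x - revD H rho q u x + lb H u v x)"
  by (simp add: lb_addl[OF E_lca] lb_addr[OF E_lca] lb_skew[OF E_lca, of "inc u"]
      dlinear_add[OF inc_dlinear] dlinear_diff[OF inc_dlinear] inc_cev inc_rev inc_revD inc_lb)

lemma lb_split_inc: "lb E (s p + inc u) (inc k) x = inc (lb H u k x + rev H rho p k x)"
  by (simp add: lb_addl[OF E_lca] dlinear_add[OF inc_dlinear] inc_rev inc_lb)

lemma nij_split: "nij E (s p + inc u) = s (nij L p) + inc (Phi p + nij H u)"
  using Phi_def
  by (simp add: dlinear_add[OF nij_E_dlinear] dlinear_add[OF inc_dlinear] inc_nij algebra_simps)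

lemma rev_twist:
  assumes "dlinear H H a"
  shows "rev H (\<lambda>p h n. a (rho (f p) (g h) n)) p h x = a (rev H rho (f p) (g h) x)"
  unfolding rev_def by (rule sym, rule dlinear_opev[OF assms finite_rho])

lemma cev_twist:
  assumes "dlinear H H a"
  shows "cev H (\<lambda>p q n. a (chi (f p) (f q) n)) p q x = a (cev H chi (f p) (f q) x)"
  unfolding cev_def by (rule sym, rule dlinear_opev[OF assms finite_chi])

end

definition wells_vanishes :: "('l::ab_group_add) nlca \<Rightarrow> ('h::ab_group_add) nlca
    \<Rightarrow> ('l \<Rightarrow> 'l \<Rightarrow> nat \<Rightarrow> 'h) \<Rightarrow> ('l \<Rightarrow> 'h \<Rightarrow> nat \<Rightarrow> 'h) \<Rightarrow> ('l \<Rightarrow> 'h)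
    \<Rightarrow> ('h \<Rightarrow> 'h) \<Rightarrow> ('l \<Rightarrow> 'l) \<Rightarrow> bool" where
  "wells_vanishes L H chi rho Phi \<alpha> \<beta> \<longleftrightarrow>
    nab_equiv L H (\<lambda>p q n. \<alpha> (chi (inv \<beta> p) (inv \<beta> q) n)) (\<lambda>p h n. \<alpha> (rho (inv \<beta> p) (inv \<alpha> h) n))
      (\<lambda>p. \<alpha> (Phi (inv \<beta> p))) chi rho Phi"

locale extension_automorphism = split_extension H E L inc proj s chi rho Phi
  for H :: "('h::ab_group_add) nlca" and E :: "('e::ab_group_add) nlca"
    and L :: "('l::ab_group_add) nlca" and inc proj s chi rho Phi +
  fixes \<gamma> :: "'e \<Rightarrow> 'e"
  assumes \<gamma>_AutH: "\<gamma> \<in> AutH E inc"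
begin

lemma \<gamma>_Aut: "\<gamma> \<in> Aut E" and \<gamma>_range_inc: "\<gamma> ` range inc = range inc"
  using \<gamma>_AutH by (auto simp: AutH_def)

lemmas \<gamma>_dlinear = Aut_dlinear[OF \<gamma>_Aut] and \<gamma>_lbr = Aut_lbr[OF \<gamma>_Aut]
  and \<gamma>_nij = Aut_nij[OF \<gamma>_Aut]

lemma \<gamma>_inj: "inj \<gamma>" and \<gamma>_surj: "surj \<gamma>"
  using \<gamma>_Aut by (auto simp: Aut_def bij_def)

definition \<alpha> :: "'h \<Rightarrow> 'h" where
  "\<alpha> = inv inc \<circ> \<gamma> \<circ> inc"

definition \<beta> :: "'l \<Rightarrow> 'l" where
  "\<beta> = proj \<circ> \<gamma> \<circ> s"

lemma PiMap_\<gamma>: "PiMap inc proj s \<gamma> = (\<alpha>, \<beta>)"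
  by (simp add: PiMap_def \<alpha>_def \<beta>_def)

lemma inc_\<alpha>: "inc (\<alpha> h) = \<gamma> (inc h)"
proof -
  have "\<gamma> (inc h) \<in> range inc" using \<gamma>_range_inc by auto
  then show ?thesis by (simp add: \<alpha>_def f_inv_into_f)
qed

lemma proj_\<gamma>: "proj (\<gamma> e) = \<beta> (proj e)"
proof -
  have "\<gamma> e = \<gamma> (s (proj e)) + \<gamma> (inc (hpart e))"
    by (subst split_decomp) (rule dlinear_add[OF \<gamma>_dlinear])
  then show ?thesis by (simp add: dlinear_add[OF proj_dlinear] inc_\<alpha>[symmetric] \<beta>_def)
qed

lemma \<alpha>_Aut: "\<alpha> \<in> Aut H"
proof -
  note simps = inc_\<alpha> dlinear_add[OF inc_dlinear] dlinear_scal[OF inc_dlinear]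
    dlinear_der[OF inc_dlinear] dlinear_add[OF \<gamma>_dlinear] dlinear_scal[OF \<gamma>_dlinear]
    dlinear_der[OF \<gamma>_dlinear]
  have "dlinear H H \<alpha>"
    by (rule dlinearI[OF lca_vector_space[OF H_lca] lca_vector_space[OF H_lca]];
        rule injD[OF inc_inj], simp add: simps)
  moreover have "\<alpha> (lbr H a b n) = lbr H (\<alpha> a) (\<alpha> b) n" for a b n
    by (rule injD[OF inc_inj]) (simp add: inc_\<alpha> inc_lbr \<gamma>_lbr)
  moreover have "\<alpha> (nij H a) = nij H (\<alpha> a)" for a
    by (rule injD[OF inc_inj]) (simp add: inc_\<alpha> inc_nij \<gamma>_nij)
  moreover have "inj \<alpha>"
    by (rule injI) (metis inc_\<alpha> \<gamma>_inj inc_inj injD)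
  moreover have "surj \<alpha>"
  proof (rule surjI)
    fix k
    obtain h where "inc k = \<gamma> (inc h)" using \<gamma>_range_inc by blast
    then have "\<alpha> h = k" by (simp add: inc_\<alpha>[symmetric] inc_eq_iff)
    then show "\<alpha> (inv \<alpha> k) = k" by (metis f_inv_into_f rangeI)
  qed
  ultimately show ?thesis by (simp add: Aut_def morph_def bij_def)
qed

lemma \<beta>_Aut: "\<beta> \<in> Aut L"
proof -
  have "dlinear L L \<beta>"
    unfolding \<beta>_def o_def by (rule dlinear_comp[OF dlinear_comp[OF s_lin \<gamma>_dlinear] proj_dlinear])
  moreover have "\<beta> (lbr L p q n) = lbr L (\<beta> p) (\<beta> q) n" for p q n
  proof -
    have "s (lbr L p q n) = lbr E (s p) (s q) n - inc (chi p q n)"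
      using chi_def by (simp add: algebra_simps)
    then show ?thesis
      by (simp add: \<beta>_def dlinear_diff[OF \<gamma>_dlinear] dlinear_diff[OF proj_dlinear] \<gamma>_lbr
          proj_lbr inc_\<alpha>[symmetric])
  qed
  moreover have "\<beta> (nij L p) = nij L (\<beta> p)" for p
  proof -
    have "s (nij L p) = nij E (s p) - inc (Phi p)"
      using Phi_def by (simp add: algebra_simps)
    then show ?thesis
      by (simp add: \<beta>_def dlinear_diff[OF \<gamma>_dlinear] dlinear_diff[OF proj_dlinear] \<gamma>_nij
          proj_nij inc_\<alpha>[symmetric])
  qed
  moreover have "inj \<beta>"
  proof (rule injI)
    fix p q assume "\<beta> p = \<beta> q"
    then have "\<gamma> (s (p - q)) \<in> range inc"
      using range_inc
      by (simp add: \<beta>_def dlinear_diff[OF s_lin] dlinear_diff[OF \<gamma>_dlinear]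
          dlinear_diff[OF proj_dlinear])
    then obtain h where "\<gamma> (s (p - q)) = \<gamma> (inc h)" using \<gamma>_range_inc by blast
    then have "s (p - q) = inc h" by (rule injD[OF \<gamma>_inj])
    then show "p = q" using proj_s[of "p - q"] by simp
  qed
  moreover have "surj \<beta>"
    by (metis proj_\<gamma> proj_surj \<gamma>_surj surj_def)
  ultimately show ?thesis by (simp add: Aut_def morph_def bij_def)
qed

definition \<tau> :: "'l \<Rightarrow> 'h" where
  "\<tau> p = inv inc (\<gamma> (s (inv \<beta> p)) - s p)"

lemma \<gamma>_s_inv_\<beta>: "\<gamma> (s (inv \<beta> p)) = s p + inc (\<tau> p)"
proof -
  have "inc (\<tau> p) = \<gamma> (s (inv \<beta> p)) - s p"
    unfolding \<tau>_def
    by (rule inc_inv_inc_ker) (simp add: dlinear_diff[OF proj_dlinear] proj_\<gamma> Aut_f_inv[OF \<beta>_Aut])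
  then show ?thesis by simp
qed

lemma \<tau>_dlinear: "dlinear L H \<tau>"
proof -
  have inc_\<tau>: "inc (\<tau> p) = \<gamma> (s (inv \<beta> p)) - s p" for p
    by (simp add: \<gamma>_s_inv_\<beta>)
  note simps = inc_\<tau> dlinear_add[OF inc_dlinear] dlinear_scal[OF inc_dlinear]
    dlinear_der[OF inc_dlinear] dlinear_add[OF \<gamma>_dlinear] dlinear_scal[OF \<gamma>_dlinear]
    dlinear_der[OF \<gamma>_dlinear] dlinear_add[OF s_lin] dlinear_scal[OF s_lin] dlinear_der[OF s_lin]
    dlinear_add[OF Aut_dlinear[OF Aut_inv[OF \<beta>_Aut]]]
    dlinear_scal[OF Aut_dlinear[OF Aut_inv[OF \<beta>_Aut]]]
    dlinear_der[OF Aut_dlinear[OF Aut_inv[OF \<beta>_Aut]]]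
    vector_space_scale_right[OF lca_vector_space[OF E_lca]]
    dlinear_diff[OF lca_der_dlinear[OF E_lca]]
  show ?thesis
    by (rule dlinearI[OF lca_vector_space[OF L_lca] lca_vector_space[OF H_lca]];
        rule injD[OF inc_inj], simp add: simps)
qed

lemma \<gamma>_lb: "\<gamma> (lb E a b x) = lb E (\<gamma> a) (\<gamma> b) x"
  by (rule lb_map[OF E_lca \<gamma>_dlinear \<gamma>_lbr])

lemma rho_equiv:
  "rev H (\<lambda>p h n. \<alpha> (rho (inv \<beta> p) (inv \<alpha> h) n)) p h x - rev H rho p h x = lb H (\<tau> p) h x"
proof (rule injD[OF inc_inj])
  have "inc (\<alpha> (rev H rho (inv \<beta> p) (inv \<alpha> h) x)) = lb E (s p + inc (\<tau> p)) (inc h) x"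
    by (simp add: inc_\<alpha> inc_rev \<gamma>_lb \<gamma>_s_inv_\<beta> inc_\<alpha>[symmetric] Aut_f_inv[OF \<alpha>_Aut])
  then show "inc (rev H (\<lambda>p h n. \<alpha> (rho (inv \<beta> p) (inv \<alpha> h) n)) p h x - rev H rho p h x)
      = inc (lb H (\<tau> p) h x)"
    by (simp add: rev_twist[OF Aut_dlinear[OF \<alpha>_Aut]] lb_split_inc dlinear_diff[OF inc_dlinear]
        dlinear_add[OF inc_dlinear])
qed

lemma chi_equiv:
  "cev H (\<lambda>p q n. \<alpha> (chi (inv \<beta> p) (inv \<beta> q) n)) p q x - cev H chi p q x
    = lb H (\<tau> p) (\<tau> q) x - \<tau> (lb L p q x) + rev H rho p (\<tau> q) x - revD H rho q (\<tau> p) x"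
proof (rule injD[OF inc_inj])
  have "inv \<beta> (lb L p q x) = lb L (inv \<beta> p) (inv \<beta> q) x"
    by (rule lb_map[OF L_lca Aut_dlinear Aut_lbr]) (rule Aut_inv[OF \<beta>_Aut])+
  then have "inc (\<alpha> (cev H chi (inv \<beta> p) (inv \<beta> q) x))
      = lb E (s p + inc (\<tau> p)) (s q + inc (\<tau> q)) x - (s (lb L p q x) + inc (\<tau> (lb L p q x)))"
    by (simp add: inc_\<alpha> inc_cev dlinear_diff[OF \<gamma>_dlinear] \<gamma>_lb \<gamma>_s_inv_\<beta>[symmetric])
  then show "inc (cev H (\<lambda>p q n. \<alpha> (chi (inv \<beta> p) (inv \<beta> q) n)) p q x - cev H chi p q x)
      = inc (lb H (\<tau> p) (\<tau> q) x - \<tau> (lb L p q x) + rev H rho p (\<tau> q) x - revD H rho q (\<tau> p) x)"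
    by (simp add: cev_twist[OF Aut_dlinear[OF \<alpha>_Aut]] lb_split dlinear_diff[OF inc_dlinear]
        dlinear_add[OF inc_dlinear] algebra_simps)
qed

lemma Phi_equiv: "\<alpha> (Phi (inv \<beta> p)) - Phi p = nij H (\<tau> p) - \<tau> (nij L p)"
proof (rule injD[OF inc_inj])
  have "inc (\<alpha> (Phi (inv \<beta> p))) = nij E (s p + inc (\<tau> p)) - (s (nij L p) + inc (\<tau> (nij L p)))"
    using Phi_def
    by (simp add: inc_\<alpha> dlinear_diff[OF \<gamma>_dlinear] \<gamma>_nij \<gamma>_s_inv_\<beta>
        Aut_nij[OF Aut_inv[OF \<beta>_Aut], symmetric])
  then show "inc (\<alpha> (Phi (inv \<beta> p)) - Phi p) = inc (nij H (\<tau> p) - \<tau> (nij L p))"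
    by (simp add: nij_split dlinear_diff[OF inc_dlinear] dlinear_add[OF inc_dlinear] Phi_def)
qed

lemma wells_vanishes_\<alpha>_\<beta>: "wells_vanishes L H chi rho Phi \<alpha> \<beta>"
  unfolding wells_vanishes_def nab_equiv_def
  using \<tau>_dlinear rho_equiv chi_equiv Phi_equiv by blast

end

locale wells_lift = split_extension H E L inc proj s chi rho Phi
  for H :: "('h::ab_group_add) nlca" and E :: "('e::ab_group_add) nlca"
    and L :: "('l::ab_group_add) nlca" and inc proj s chi rho Phi +
  fixes \<alpha> :: "'h \<Rightarrow> 'h" and \<beta> :: "'l \<Rightarrow> 'l" and \<tau> :: "'l \<Rightarrow> 'h"
  assumes \<alpha>_Aut: "\<alpha> \<in> Aut H" and \<beta>_Aut: "\<beta> \<in> Aut L" and \<tau>_dlinear: "dlinear L H \<tau>"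
    and rho_equiv: "\<And>p h x.
      rev H (\<lambda>p h n. \<alpha> (rho (inv \<beta> p) (inv \<alpha> h) n)) p h x - rev H rho p h x = lb H (\<tau> p) h x"
    and chi_equiv: "\<And>p q x.
      cev H (\<lambda>p q n. \<alpha> (chi (inv \<beta> p) (inv \<beta> q) n)) p q x - cev H chi p q x
        = lb H (\<tau> p) (\<tau> q) x - \<tau> (lb L p q x) + rev H rho p (\<tau> q) x - revD H rho q (\<tau> p) x"
    and Phi_equiv: "\<And>p. \<alpha> (Phi (inv \<beta> p)) - Phi p = nij H (\<tau> p) - \<tau> (nij L p)"
begin

lemmas \<alpha>_dlinear = Aut_dlinear[OF \<alpha>_Aut] and \<alpha>_lbr = Aut_lbr[OF \<alpha>_Aut]
  and \<alpha>_nij = Aut_nij[OF \<alpha>_Aut] and \<alpha>_inv = Aut_inv_f[OF \<alpha>_Aut] Aut_f_inv[OF \<alpha>_Aut]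

lemmas \<beta>_dlinear = Aut_dlinear[OF \<beta>_Aut] and \<beta>_lbr = Aut_lbr[OF \<beta>_Aut]
  and \<beta>_nij = Aut_nij[OF \<beta>_Aut] and \<beta>_inv = Aut_inv_f[OF \<beta>_Aut] Aut_f_inv[OF \<beta>_Aut]

lemma rho_untwisted: "\<alpha> (rev H rho p k x) = lb H (\<tau> (\<beta> p)) (\<alpha> k) x + rev H rho (\<beta> p) (\<alpha> k) x"
  using rho_equiv[of "\<beta> p" "\<alpha> k" x] by (simp add: rev_twist[OF \<alpha>_dlinear] \<alpha>_inv \<beta>_inv diff_eq_eq)

lemma chi_untwisted:
  "\<alpha> (cev H chi p q x) = cev H chi (\<beta> p) (\<beta> q) x + lb H (\<tau> (\<beta> p)) (\<tau> (\<beta> q)) x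
    - \<tau> (lb L (\<beta> p) (\<beta> q) x) + rev H rho (\<beta> p) (\<tau> (\<beta> q)) x - revD H rho (\<beta> q) (\<tau> (\<beta> p)) x"
  using chi_equiv[of "\<beta> p" "\<beta> q" x]
  by (simp add: cev_twist[OF \<alpha>_dlinear] \<beta>_inv diff_eq_eq algebra_simps)

lemma Phi_untwisted: "\<alpha> (Phi p) = Phi (\<beta> p) + nij H (\<tau> (\<beta> p)) - \<tau> (nij L (\<beta> p))"
  using Phi_equiv[of "\<beta> p"] by (simp add: \<beta>_inv diff_eq_eq algebra_simps)

definition \<gamma> :: "'e \<Rightarrow> 'e" where
  "\<gamma> e = s (\<beta> (proj e)) + inc (\<tau> (\<beta> (proj e)) + \<alpha> (hpart e))"

lemma \<gamma>_split: "\<gamma> (s p + inc h) = s (\<beta> p) + inc (\<tau> (\<beta> p) + \<alpha> h)"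
  by (simp add: \<gamma>_def)

lemma \<gamma>_inc: "\<gamma> (inc h) = inc (\<alpha> h)"
  by (simp add: \<gamma>_def dlinear_zero[OF \<beta>_dlinear] dlinear_zero[OF \<tau>_dlinear] dlinear_zero[OF s_lin])

lemma \<gamma>_s: "\<gamma> (s p) = s (\<beta> p) + inc (\<tau> (\<beta> p))"
  by (simp add: \<gamma>_def dlinear_zero[OF \<alpha>_dlinear])

lemma \<gamma>_dlinear: "dlinear E E \<gamma>"
proof -
  have \<beta>_proj: "dlinear E L (\<lambda>e. \<beta> (proj e))" by (rule dlinear_comp[OF proj_dlinear \<beta>_dlinear])
  have "dlinear E H (\<lambda>e. \<tau> (\<beta> (proj e)) + \<alpha> (hpart e))"
    by (rule dlinear_plus[OF dlinear_comp[OF \<beta>_proj \<tau>_dlinear]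
          dlinear_comp[OF hpart_dlinear \<alpha>_dlinear] lca_der_dlinear[OF H_lca]])
  from dlinear_plus[OF dlinear_comp[OF \<beta>_proj s_lin] dlinear_comp[OF this inc_dlinear]
      lca_der_dlinear[OF E_lca]]
  show ?thesis by (simp add: \<gamma>_def[abs_def])
qed

lemma \<gamma>_bij: "bij \<gamma>"
proof -
  define \<delta> where "\<delta> e = s (inv \<beta> (proj e)) + inc (inv \<alpha> (hpart e - \<tau> (proj e)))" for e
  show ?thesis
  proof (rule o_bij[of \<delta>])
  show "\<delta> \<circ> \<gamma> = id"
    by (simp add: fun_eq_iff \<delta>_def \<gamma>_def \<alpha>_inv \<beta>_inv split_decomp[symmetric])
  show "\<gamma> \<circ> \<delta> = id"
    by (simp add: fun_eq_iff \<delta>_def \<gamma>_split \<alpha>_inv \<beta>_inv split_decomp[symmetric])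
  qed
qed

lemma \<gamma>_range_inc: "\<gamma> ` range inc = range inc"
proof
  show "\<gamma> ` range inc \<subseteq> range inc" by (auto simp: \<gamma>_inc)
  show "range inc \<subseteq> \<gamma> ` range inc"
    by (auto simp: \<gamma>_inc \<alpha>_inv intro!: image_eqI[where x = "inc (inv \<alpha> _)"])
qed

lemma \<gamma>_nij: "\<gamma> (nij E e) = nij E (\<gamma> e)"
proof -
  obtain p h where "e = s p + inc h" using split_decomp by blast
  then show ?thesis
    by (simp add: nij_split \<gamma>_split \<beta>_nij \<alpha>_nij Phi_untwisted dlinear_add[OF \<alpha>_dlinear]
        dlinear_add[OF nij_H_dlinear] add.assoc)
qed

lemma \<gamma>_lbr_inc_inc: "\<gamma> (lbr E (inc h) (inc k) n) = lbr E (\<gamma> (inc h)) (\<gamma> (inc k)) n"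
  by (simp add: inc_lbr[symmetric] \<gamma>_inc \<alpha>_lbr)

lemma \<gamma>_lbr_s_inc: "\<gamma> (lbr E (s p) (inc k) n) = lbr E (\<gamma> (s p)) (\<gamma> (inc k)) n"
proof (rule lbr_map_of_lb_map[OF E_lca \<gamma>_dlinear])
  show "\<gamma> (lb E (s p) (inc k) x) = lb E (\<gamma> (s p)) (\<gamma> (inc k)) x" for x
    by (simp add: inc_rev[symmetric] \<gamma>_inc \<gamma>_s rho_untwisted lb_split_inc)
qed

lemma \<gamma>_lbr_s_s: "\<gamma> (lbr E (s p) (s q) n) = lbr E (\<gamma> (s p)) (\<gamma> (s q)) n"
proof (rule lbr_map_of_lb_map[OF E_lca \<gamma>_dlinear])
  fix x
  have "lb E (s p) (s q) x = s (lb L p q x) + inc (cev H chi p q x)"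
    by (simp add: inc_cev)
  moreover have "\<beta> (lb L p q x) = lb L (\<beta> p) (\<beta> q) x"
    by (rule lb_map[OF L_lca \<beta>_dlinear \<beta>_lbr])
  ultimately show "\<gamma> (lb E (s p) (s q) x) = lb E (\<gamma> (s p)) (\<gamma> (s q)) x"
    by (simp add: \<gamma>_split \<gamma>_s dlinear_zero[OF \<alpha>_dlinear]
        lb_split chi_untwisted algebra_simps)
qed

lemma \<gamma>_lbr: "\<gamma> (lbr E a b n) = lbr E (\<gamma> a) (\<gamma> b) n"
proof -
  obtain p h where a: "a = s p + inc h" using split_decomp by blast
  obtain q k where b: "b = s q + inc k" using split_decomp by blast
  have "\<gamma> (lbr E (inc h) (s q) n) = lbr E (\<gamma> (inc h)) (\<gamma> (s q)) n"
    by (rule lbr_map_swap[OF E_lca \<gamma>_dlinear \<gamma>_lbr_s_inc])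
  then show ?thesis
    by (simp add: a b lbr_addl[OF E_lca] lbr_addr[OF E_lca] dlinear_add[OF \<gamma>_dlinear]
        \<gamma>_lbr_inc_inc \<gamma>_lbr_s_inc \<gamma>_lbr_s_s)
qed

lemma \<gamma>_AutH: "\<gamma> \<in> AutH E inc"
  using \<gamma>_dlinear \<gamma>_lbr \<gamma>_nij \<gamma>_bij \<gamma>_range_inc by (simp add: AutH_def Aut_def morph_def)

lemma PiMap_\<gamma>: "PiMap inc proj s \<gamma> = (\<alpha>, \<beta>)"
  by (simp add: PiMap_def fun_eq_iff \<gamma>_inc \<gamma>_s)

end

context split_extension
begin

lemma PiMap_image_AutH:
  "PiMap inc proj s ` AutH E inc
    = {(\<alpha>, \<beta>). \<alpha> \<in> Aut H \<and> \<beta> \<in> Aut L \<and> wells_vanishes L H chi rho Phi \<alpha> \<beta>}"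
proof (intro equalityI subsetI)
  fix \<pi> assume "\<pi> \<in> PiMap inc proj s ` AutH E inc"
  then obtain \<gamma> where \<gamma>: "\<gamma> \<in> AutH E inc" and \<pi>: "\<pi> = PiMap inc proj s \<gamma>" by blast
  interpret extension_automorphism H E L inc proj s chi rho Phi \<gamma>
    by (rule extension_automorphism.intro[OF split_extension_axioms])
      (rule extension_automorphism_axioms.intro[OF \<gamma>])
  show "\<pi> \<in> {(\<alpha>, \<beta>). \<alpha> \<in> Aut H \<and> \<beta> \<in> Aut L \<and> wells_vanishes L H chi rho Phi \<alpha> \<beta>}"
    using \<alpha>_Aut \<beta>_Aut wells_vanishes_\<alpha>_\<beta> by (simp add: \<pi> PiMap_\<gamma>)
next
  fix \<pi> assume "\<pi> \<in> {(\<alpha>, \<beta>). \<alpha> \<in> Aut H \<and> \<beta> \<in> Aut L \<and> wells_vanishes L H chi rho Phi \<alpha> \<beta>}"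
  then obtain \<alpha> \<beta> \<tau> where \<pi>: "\<pi> = (\<alpha>, \<beta>)" and lift: "wells_lift H E L inc proj s chi rho Phi \<alpha> \<beta> \<tau>"
    by (auto simp: wells_vanishes_def nab_equiv_def wells_lift_def wells_lift_axioms_def
        split_extension_axioms)
  interpret wells_lift H E L inc proj s chi rho Phi \<alpha> \<beta> \<tau> by (rule lift)
  show "\<pi> \<in> PiMap inc proj s ` AutH E inc"
    using \<gamma>_AutH PiMap_\<gamma> \<pi> by (metis image_eqI)
qed

end

theorem theorem6p6:
  fixes H :: "('h::ab_group_add) nlca" and E :: "('e::ab_group_add) nlca"
    and L :: "('l::ab_group_add) nlca"
    and inc :: "'h \<Rightarrow> 'e" and proj :: "'e \<Rightarrow> 'l" and s :: "'l \<Rightarrow> 'e"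
    and chi :: "'l \<Rightarrow> 'l \<Rightarrow> nat \<Rightarrow> 'h" and rho :: "'l \<Rightarrow> 'h \<Rightarrow> nat \<Rightarrow> 'h"
    and Phi :: "'l \<Rightarrow> 'h"
  assumes ext: "nab_extension H E L inc proj"
    and s_lin: "dlinear L E s"
    and s_sec: "\<forall>p. proj (s p) = p"
    and chi_def: "\<forall>p q n. inc (chi p q n) = lbr E (s p) (s q) n - s (lbr L p q n)"
    and rho_def: "\<forall>p h n. inc (rho p h n) = lbr E (s p) (inc h) n"
    and Phi_def: "\<forall>p. inc (Phi p) = nij E (s p) - s (nij L p)"
  shows "inj_on (\<lambda>\<gamma>. \<gamma>) (AutLH E inc proj s)
    \<and> AutLH E inc proj s \<subseteq> AutH E inc
    \<and> {\<gamma> \<in> AutH E inc. PiMap inc proj s \<gamma> = (id, id)} = AutLH E inc proj s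
    \<and> PiMap inc proj s ` AutH E inc =
        {(\<alpha>, \<beta>). \<alpha> \<in> Aut H \<and> \<beta> \<in> Aut L
           \<and> nab_equiv L H
               (\<lambda>p q n. \<alpha> (chi (inv \<beta> p) (inv \<beta> q) n))
               (\<lambda>p h n. \<alpha> (rho (inv \<beta> p) (inv \<alpha> h) n))
               (\<lambda>p. \<alpha> (Phi (inv \<beta> p)))
               chi rho Phi}"
proof -
  interpret split_extension H E L inc proj s chi rho Phi
    using ext s_lin s_sec chi_def rho_def Phi_def by (rule split_extension.intro)
  show ?thesis
    unfolding PiMap_image_AutH wells_vanishes_def by (auto simp: AutLH_def)
qed

end
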